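(* Let $X=Y\cup Z$ where $Y\cap Z=\emptyset$, $Z$ is a $\sigma$-compact subspace of $X$ and $Y$ is a closed discrete subset of $X$. If $X$ is absolutely strongly star-Lindelöf and $|Y|<\mathfrak{b}$, then $X$ is selectively strongly star-Hurewicz.
   Context: All spaces are regular. $St(A,\mathcal{U})=\bigcup\{U\in\mathcal{U}:U\cap A\neq\emptyset\}$. $\mathfrak{b}$ is the bounding number. $X$ is absolutely strongly star-Lindelöf if for every open cover $\mathcal{U}$ and every dense $D\subseteq X$ there is a countable $C\subseteq D$ with $St(C,\mathcal{U})=X$. $X$ is selectively strongly star-Hurewicz if for every sequence $(\mathcal{U}_n)$ of open covers and every sequence $(D_n)$ of dense subsets there are finite $F_n\subseteq D_n$ such that every $x\in X$ lies in $St(F_n,\mathcal{U}_n)$ for all but finitely many $n$. *)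

theory Defs
  imports "HOL-Analysis.Analysis" "HOL-Library.Equipollence"
begin

definition star :: "'a set \<Rightarrow> 'a set set \<Rightarrow> 'a set" where
  "star A \<U> = \<Union>{U \<in> \<U>. U \<inter> A \<noteq> {}}"

definition open_cover_of :: "'a topology \<Rightarrow> 'a set set \<Rightarrow> bool" where
  "open_cover_of X \<U> \<longleftrightarrow> (\<forall>U\<in>\<U>. openin X U) \<and> \<Union>\<U> = topspace X"

definition dense_in :: "'a topology \<Rightarrow> 'a set \<Rightarrow> bool" where
  "dense_in X D \<longleftrightarrow> D \<subseteq> topspace X \<and> X closure_of D = topspace X"

definition sigma_compact_in :: "'a topology \<Rightarrow> 'a set \<Rightarrow> bool" where
  "sigma_compact_in X Z \<longleftrightarrow>
     (\<exists>\<K>. countable \<K> \<and> (\<forall>K\<in>\<K>. compactin X K) \<and> Z = \<Union>\<K>)"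

definition absolutely_strongly_star_Lindelof :: "'a topology \<Rightarrow> bool" where
  "absolutely_strongly_star_Lindelof X \<longleftrightarrow>
     (\<forall>\<U> D. open_cover_of X \<U> \<and> dense_in X D \<longrightarrow>
        (\<exists>C. C \<subseteq> D \<and> countable C \<and> star C \<U> = topspace X))"

definition selectively_strongly_star_Hurewicz :: "'a topology \<Rightarrow> bool" where
  "selectively_strongly_star_Hurewicz X \<longleftrightarrow>
     (\<forall>\<U> :: nat \<Rightarrow> 'a set set. \<forall>D :: nat \<Rightarrow> 'a set.
        (\<forall>n. open_cover_of X (\<U> n)) \<and> (\<forall>n. dense_in X (D n)) \<longrightarrow>
        (\<exists>F :: nat \<Rightarrow> 'a set. (\<forall>n. finite (F n) \<and> F n \<subseteq> D n) \<and>
           (\<forall>x\<in>topspace X. \<forall>\<^sub>F n in sequentially. x \<in> star (F n) (\<U> n))))"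

definition bounded_family :: "(nat \<Rightarrow> nat) set \<Rightarrow> bool" where
  "bounded_family F \<longleftrightarrow> (\<exists>g. \<forall>f\<in>F. \<forall>\<^sub>F n in sequentially. f n \<le> g n)"

text \<open>|A| < \<b>, where \<b> is the least cardinality of an unbounded family:
  no unbounded family has cardinality at most |A|.\<close>
definition card_less_bounding_number :: "'a set \<Rightarrow> bool" where
  "card_less_bounding_number A \<longleftrightarrow>
     (\<forall>F :: (nat \<Rightarrow> nat) set. \<not> bounded_family F \<longrightarrow> \<not> (F \<lesssim> A))"

end

theory Submission
  imports Defs
begin

text \<open>On the \<open>\<sigma>\<close>-compact part every point lies in one of countably many compact sets
  \<open>K\<^sub>m\<close>, and each \<open>K\<^sub>m\<close> is covered by the star of a finite subset of any dense set;
  collecting these finite sets for \<open>m \<le> n\<close> at stage \<open>n\<close> catches every point of \<open>Z\<close>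
  from some stage on. On \<open>Y\<close>, absolute strong star-Lindelof-ness gives countable sets
  \<open>C\<^sub>n = {e\<^sub>n(0), e\<^sub>n(1), \<dots>}\<close> whose stars cover; choosing an index \<open>k\<close> with
  \<open>y \<in> St({e\<^sub>n(k)}, \<U>\<^sub>n)\<close> defines a function \<open>f\<^sub>y \<in> \<omega>\<^sup>\<omega>\<close>, and since \<open>|Y| < \<b>\<close> a single
  \<open>g\<close> eventually dominates all \<open>f\<^sub>y\<close>, so \<open>{e\<^sub>n(k) | k \<le> g(n)}\<close> works for all of \<open>Y\<close>.\<close>

lemma star_iff: "x \<in> star A \<U> \<longleftrightarrow> (\<exists>U\<in>\<U>. x \<in> U \<and> U \<inter> A \<noteq> {})"
  unfolding star_def by blast

lemma star_mono: "A \<subseteq> B \<Longrightarrow> star A \<U> \<subseteq> star B \<U>"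
  unfolding star_def by blast

lemma eventually_star_UnI:
  assumes "(\<forall>\<^sub>F n in F. x \<in> star (A n) (\<U> n)) \<or> (\<forall>\<^sub>F n in F. x \<in> star (B n) (\<U> n))"
  shows "\<forall>\<^sub>F n in F. x \<in> star (A n \<union> B n) (\<U> n)"
proof -
  have "star (A n) (\<U> n) \<union> star (B n) (\<U> n) \<subseteq> star (A n \<union> B n) (\<U> n)" for n
    by (intro Un_least star_mono) blast+
  then show ?thesis
    using assms by (auto elim!: eventually_mono)
qed

lemma compactin_subset_star_finite:
  assumes K: "compactin X K" and \<U>: "open_cover_of X \<U>" and D: "dense_in X D"
  obtains G where "finite G" "G \<subseteq> D" "K \<subseteq> star G \<U>"
proof -
  have opens: "\<forall>U\<in>\<U>. openin X U" and "K \<subseteq> \<Union>\<U>"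
    using \<U> compactin_subset_topspace[OF K] unfolding open_cover_of_def by auto
  then obtain \<F> where \<F>: "finite \<F>" "\<F> \<subseteq> \<U>" "K \<subseteq> \<Union>\<F>"
    using K unfolding compactin_def by blast
  have "\<exists>d. d \<in> U \<inter> D" if "U \<in> \<F>" "U \<noteq> {}" for U
    using dense_intersects_open[of X D] D opens that \<F>(2)
    unfolding dense_in_def by blast
  then obtain pick where pick: "\<And>U. U \<in> \<F> \<Longrightarrow> U \<noteq> {} \<Longrightarrow> pick U \<in> U \<inter> D"
    by metis
  show thesis
  proof
    show "finite (pick ` {U\<in>\<F>. U \<noteq> {}})" using \<F>(1) by simp
    show "pick ` {U\<in>\<F>. U \<noteq> {}} \<subseteq> D" using pick by blast
    show "K \<subseteq> star (pick ` {U\<in>\<F>. U \<noteq> {}}) \<U>"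
    proof
      fix x assume "x \<in> K"
      then obtain U where "U \<in> \<F>" "x \<in> U" using \<F>(3) by blast
      then show "x \<in> star (pick ` {U\<in>\<F>. U \<noteq> {}}) \<U>"
        unfolding star_iff using pick \<F>(2) by blast
    qed
  qed
qed

lemma sigma_compact_in_iff_sequence:
  "sigma_compact_in X Z \<longleftrightarrow> (\<exists>K. (\<forall>m::nat. compactin X (K m)) \<and> Z = (\<Union>m. K m))"
proof
  assume "sigma_compact_in X Z"
  then obtain \<K> where \<K>: "countable \<K>" "\<forall>K\<in>\<K>. compactin X K" "Z = \<Union>\<K>"
    unfolding sigma_compact_in_def by blast
  show "\<exists>K. (\<forall>m::nat. compactin X (K m)) \<and> Z = (\<Union>m. K m)"
  proof (cases "\<K> = {}")
    case True
    then show ?thesis using \<K>(3) by (intro exI[of _ "\<lambda>_. {}"]) auto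
  next
    case False
    then show ?thesis using \<K> range_from_nat_into[OF False \<K>(1)] from_nat_into[OF False]
      by (intro exI[of _ "from_nat_into \<K>"]) auto
  qed
next
  assume "\<exists>K. (\<forall>m::nat. compactin X (K m)) \<and> Z = (\<Union>m. K m)"
  then obtain K :: "nat \<Rightarrow> 'a set" where "\<forall>m. compactin X (K m)" "Z = (\<Union>m. K m)"
    by blast
  then show "sigma_compact_in X Z"
    unfolding sigma_compact_in_def by (intro exI[of _ "range K"]) auto
qed

lemma sigma_compact_in_eventually_star:
  assumes "sigma_compact_in X Z"
    and "\<And>n. open_cover_of X (\<U> n)" and "\<And>n. dense_in X (D n)"
  obtains F where "\<And>n. finite (F n)" "\<And>n. F n \<subseteq> D n"
    "\<And>z. z \<in> Z \<Longrightarrow> \<forall>\<^sub>F n in sequentially. z \<in> star (F n) (\<U> n)"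
proof -
  obtain K :: "nat \<Rightarrow> 'a set" where K: "\<And>m. compactin X (K m)" "Z = (\<Union>m. K m)"
    using assms(1) unfolding sigma_compact_in_iff_sequence by blast
  have "\<exists>G. finite G \<and> G \<subseteq> D n \<and> K m \<subseteq> star G (\<U> n)" for n m
    by (rule compactin_subset_star_finite[OF K(1) assms(2,3)]) blast
  then obtain G where G: "\<And>n m. finite (G n m)" "\<And>n m. G n m \<subseteq> D n"
    "\<And>n m. K m \<subseteq> star (G n m) (\<U> n)"
    by metis
  show thesis
  proof
    show "finite (\<Union>m\<le>n. G n m)" "(\<Union>m\<le>n. G n m) \<subseteq> D n" for n
      using G(1,2) by blast+
    fix z assume "z \<in> Z"
    then obtain m where "z \<in> K m" using K(2) by blast
    then show "\<forall>\<^sub>F n in sequentially. z \<in> star (\<Union>m\<le>n. G n m) (\<U> n)"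
      using G(3) star_mono[of "G _ m" "\<Union>m\<le>_. G _ m"]
      by (intro eventually_sequentiallyI[of m]) blast
  qed
qed

lemma card_less_bounding_number_bounded_image:
  "card_less_bounding_number Y \<Longrightarrow> bounded_family (f ` Y)"
  unfolding card_less_bounding_number_def using image_lepoll by blast

lemma card_less_bounding_number_eventually_star:
  assumes Y: "card_less_bounding_number Y"
    and C: "\<And>n. countable (C n)" "\<And>n. Y \<subseteq> star (C n) (\<U> n)"
  obtains F where "\<And>n. finite (F n)" "\<And>n. F n \<subseteq> C n"
    "\<And>y. y \<in> Y \<Longrightarrow> \<forall>\<^sub>F n in sequentially. y \<in> star (F n) (\<U> n)"
proof (cases "Y = {}")
  case True
  then show thesis using that[of "\<lambda>_. {}"] by simp
next
  case False
  then have C_nonempty: "C n \<noteq> {}" for n using C(2)[of n] unfolding star_def by blast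
  define e where "e n = from_nat_into (C n)" for n
  have e_range: "range (e n) = C n" for n
    unfolding e_def by (rule range_from_nat_into[OF C_nonempty C(1)])
  have "\<exists>k. y \<in> star {e n k} (\<U> n)" if y: "y \<in> Y" for y n
  proof -
    have "y \<in> star (C n) (\<U> n)" using y C(2) by blast
    then obtain U c where "U \<in> \<U> n" "y \<in> U" "c \<in> U" "c \<in> C n"
      unfolding star_iff by blast
    moreover obtain k where "c = e n k" using \<open>c \<in> C n\<close> e_range[of n] by blast
    ultimately show ?thesis unfolding star_iff by blast
  qed
  then obtain f where f: "\<And>y n. y \<in> Y \<Longrightarrow> y \<in> star {e n (f y n)} (\<U> n)"
    by metis
  obtain g where g: "\<And>y. y \<in> Y \<Longrightarrow> \<forall>\<^sub>F n in sequentially. f y n \<le> g n"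
    using card_less_bounding_number_bounded_image[OF Y, of f]
    unfolding bounded_family_def by blast
  show thesis
  proof
    show "finite (e n ` {..g n})" "e n ` {..g n} \<subseteq> C n" for n
      using e_range by auto
    fix y assume "y \<in> Y"
    show "\<forall>\<^sub>F n in sequentially. y \<in> star (e n ` {..g n}) (\<U> n)"
      using g[OF \<open>y \<in> Y\<close>]
    proof (rule eventually_mono)
      fix n assume "f y n \<le> g n"
      then have "{e n (f y n)} \<subseteq> e n ` {..g n}" by simp
      then show "y \<in> star (e n ` {..g n}) (\<U> n)"
        using f[OF \<open>y \<in> Y\<close>] star_mono by blast
    qed
  qed
qed

theorem mainTheorem7:
  fixes X :: "'a topology" and Y Z :: "'a set"
  assumes "regular_space X" and "t1_space X"
    and "topspace X = Y \<union> Z" and "Y \<inter> Z = {}"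
    and "sigma_compact_in X Z"
    and "closedin X Y" and "subtopology X Y = discrete_topology Y"
    and "absolutely_strongly_star_Lindelof X"
    and "card_less_bounding_number Y"
  shows "selectively_strongly_star_Hurewicz X"
  unfolding selectively_strongly_star_Hurewicz_def
proof (intro allI impI, elim conjE)
  fix \<U> :: "nat \<Rightarrow> 'a set set" and D :: "nat \<Rightarrow> 'a set"
  assume "\<forall>n. open_cover_of X (\<U> n)" and "\<forall>n. dense_in X (D n)"
  then have \<U>: "\<And>n. open_cover_of X (\<U> n)" and D: "\<And>n. dense_in X (D n)" by blast+
  have "\<forall>n. \<exists>C. C \<subseteq> D n \<and> countable C \<and> star C (\<U> n) = topspace X"
    using assms(8) \<U> D unfolding absolutely_strongly_star_Lindelof_def by blast
  then obtain C where C: "\<And>n. C n \<subseteq> D n" "\<And>n. countable (C n)"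
    "\<And>n. star (C n) (\<U> n) = topspace X"
    by metis
  have Y_covered: "Y \<subseteq> star (C n) (\<U> n)" for n
    using C(3) assms(3) by simp
  obtain FY where FY: "\<And>n. finite (FY n)" "\<And>n. FY n \<subseteq> C n"
    "\<And>y. y \<in> Y \<Longrightarrow> \<forall>\<^sub>F n in sequentially. y \<in> star (FY n) (\<U> n)"
    using card_less_bounding_number_eventually_star[where C = C, OF assms(9) C(2) Y_covered] by blast
  obtain FZ where FZ: "\<And>n. finite (FZ n)" "\<And>n. FZ n \<subseteq> D n"
    "\<And>z. z \<in> Z \<Longrightarrow> \<forall>\<^sub>F n in sequentially. z \<in> star (FZ n) (\<U> n)"
    using sigma_compact_in_eventually_star[where \<U> = \<U> and D = D, OF assms(5) \<U> D] by blast
  have "\<forall>\<^sub>F n in sequentially. x \<in> star (FY n \<union> FZ n) (\<U> n)" if x: "x \<in> topspace X" for x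
    using x FY(3) FZ(3) unfolding assms(3) by (blast intro: eventually_star_UnI)
  moreover have "finite (FY n \<union> FZ n) \<and> FY n \<union> FZ n \<subseteq> D n" for n
    using FY(1,2) FZ(1,2) C(1)[of n] by blast
  ultimately show "\<exists>F. (\<forall>n. finite (F n) \<and> F n \<subseteq> D n) \<and>
      (\<forall>x\<in>topspace X. \<forall>\<^sub>F n in sequentially. x \<in> star (F n) (\<U> n))"
    by (intro exI[of _ "\<lambda>n. FY n \<union> FZ n"]) blast
qed

end
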